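(* Let $\epsilon>0$, $\zeta>1$, and let $N_\epsilon=\{(x,y)\in\mathbb{R}^2: 0<x^2+y^2<\epsilon^2\}$ with the Lorentzian metric $ds^2=4\{(y^2-(\zeta-1)x^2)\,dx^2+(x^2-(\zeta-1)y^2)\,dy^2+2\zeta xy\,dx\,dy\}$, time-oriented so that the function $-x^2+y^2$ increases along future directed timelike curves. Then $(N_\epsilon,g)$ is not causally continuous.
   Context: This is the neighbourhood geometry of type $(1,1)$ (the "trousers"): the Morse metric $g_{\mu\nu}=h_{\mu\nu}|df|_h^2-\zeta\,\partial_\mu f\,\partial_\nu f$ built from the flat Euclidean metric $h$ and $f=-x^2+y^2$ (plus a constant) on the punctured disc. Chronological relations are computed within $N_\epsilon$: $a\ll b$ iff there is a future directed $C^1$ timelike curve in $N_\epsilon$ from $a$ to $b$; $I^+(a)=\{b:a\ll b\}$, $I^-(a)=\{b:b\ll a\}$; for open $U$, $\downarrow U=\mathrm{Int}\{c:c\ll u\ \forall u\in U\}$, $\uparrow U=\mathrm{Int}\{c:u\ll c\ \forall u\in U\}$. The spacetime is causally continuous if $I^+(a)=\uparrow I^-(a)$ and $I^-(a)=\downarrow I^+(a)$ for all $a\in N_\epsilon$. *)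

theory Defs
  imports "HOL-Analysis.Analysis"
begin

definition N_eps :: "real \<Rightarrow> (real \<times> real) set" where
  "N_eps \<epsilon> = {p. 0 < (fst p)^2 + (snd p)^2 \<and> (fst p)^2 + (snd p)^2 < \<epsilon>^2}"

definition gmet :: "real \<Rightarrow> real \<times> real \<Rightarrow> real \<times> real \<Rightarrow> real" where
  "gmet \<zeta> p v = 4 * (((snd p)^2 - (\<zeta> - 1) * (fst p)^2) * (fst v)^2
                    + ((fst p)^2 - (\<zeta> - 1) * (snd p)^2) * (snd v)^2
                    + 2 * \<zeta> * fst p * snd p * fst v * snd v)"

text \<open>Future directed timelike: g(v,v) < 0 and df(v) > 0 with f = -x^2+y^2.\<close>
definition fut_timelike :: "real \<Rightarrow> real \<times> real \<Rightarrow> real \<times> real \<Rightarrow> bool" where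
  "fut_timelike \<zeta> p v \<longleftrightarrow> gmet \<zeta> p v < 0 \<and> -2 * fst p * fst v + 2 * snd p * snd v > 0"

definition chron :: "real \<Rightarrow> real \<Rightarrow> real \<times> real \<Rightarrow> real \<times> real \<Rightarrow> bool" where
  "chron \<epsilon> \<zeta> a b \<longleftrightarrow>
     (\<exists>\<gamma> \<gamma>'. \<gamma> 0 = a \<and> \<gamma> 1 = b \<and> continuous_on {0..1} \<gamma>' \<and>
        (\<forall>t\<in>{0..1::real}. \<gamma> t \<in> N_eps \<epsilon> \<and>
            (\<gamma> has_vector_derivative \<gamma>' t) (at t within {0..1}) \<and>
            fut_timelike \<zeta> (\<gamma> t) (\<gamma>' t)))"

definition Ifut :: "real \<Rightarrow> real \<Rightarrow> real \<times> real \<Rightarrow> (real \<times> real) set" where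
  "Ifut \<epsilon> \<zeta> a = {b. chron \<epsilon> \<zeta> a b}"

definition Ipast :: "real \<Rightarrow> real \<Rightarrow> real \<times> real \<Rightarrow> (real \<times> real) set" where
  "Ipast \<epsilon> \<zeta> a = {b. chron \<epsilon> \<zeta> b a}"

definition down :: "real \<Rightarrow> real \<Rightarrow> (real \<times> real) set \<Rightarrow> (real \<times> real) set" where
  "down \<epsilon> \<zeta> U = interior {c \<in> N_eps \<epsilon>. \<forall>u\<in>U. chron \<epsilon> \<zeta> c u}"

definition up :: "real \<Rightarrow> real \<Rightarrow> (real \<times> real) set \<Rightarrow> (real \<times> real) set" where
  "up \<epsilon> \<zeta> U = interior {c \<in> N_eps \<epsilon>. \<forall>u\<in>U. chron \<epsilon> \<zeta> u c}"

definition causally_continuous :: "real \<Rightarrow> real \<Rightarrow> bool" where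
  "causally_continuous \<epsilon> \<zeta> \<longleftrightarrow>
     (\<forall>a\<in>N_eps \<epsilon>. Ifut \<epsilon> \<zeta> a = up \<epsilon> \<zeta> (Ipast \<epsilon> \<zeta> a)
                  \<and> Ipast \<epsilon> \<zeta> a = down \<epsilon> \<zeta> (Ifut \<epsilon> \<zeta> a))"

end

theory Submission
  imports Defs
begin

text \<open>
  Write \<open>z = x + i y\<close>, \<open>w = z^2\<close> and \<open>k = sqrt (\<zeta> - 1)\<close>. Since \<open>dw = 2 z dz\<close>, the metric is
  \<open>4 (dQ^2 - k^2 dP^2)\<close> with \<open>P = Re w\<close>, \<open>Q = Im w\<close>, and a vector is future directed timelike
  iff the null coordinates \<open>N = Q - k P\<close> and \<open>M = Q + k P\<close> of \<open>dw\<close> satisfy \<open>dN > 0 > dM\<close>.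
  So along future curves \<open>N(z^2)\<close> increases and \<open>M(z^2)\<close> decreases. With \<open>\<mu>^2 = 1 - i k\<close>
  one has \<open>N(z^2) = 2 Re(\<mu> z) Im(\<mu> z)\<close>.

  Let \<open>\<mu> a > 0\<close>, so \<open>N(a^2) = 0\<close>. A future curve from \<open>a\<close> to a point \<open>c\<close> with \<open>Re(\<mu> c) < 0\<close>
  must meet the line \<open>Re(\<mu> z) = 0\<close>, where \<open>N(z^2) = 0\<close> again; hence \<open>c \<notin> I^+(a)\<close>. For the
  same reason every \<open>u \<in> I^-(a)\<close> has \<open>Im(\<mu> u) < 0\<close> and \<open>N(u^2) < 0 < M(u^2)\<close>. If moreover
  \<open>Im(\<mu> c) < 0\<close> and \<open>N(c^2) > 0 > M(c^2)\<close>, a timelike curve from \<open>u^2\<close> to \<open>c^2\<close> in the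
  \<open>w\<close>-disc that passes below the origin, avoiding the ray \<open>N = 0 \<le> M\<close>, lifts through a branch of
  the square root to a future curve from \<open>u\<close> to \<open>c\<close>. These conditions are open, so
  \<open>c \<in> \<up>I^-(a) - I^+(a)\<close>.
\<close>

definition complex_of_pair :: "real \<times> real \<Rightarrow> complex" where
  "complex_of_pair p = Complex (fst p) (snd p)"

lemma complex_of_pair_Re_Im [simp]: "complex_of_pair (Re z, Im z) = z"
  by (simp add: complex_of_pair_def)

lemma Re_Im_complex_of_pair [simp]: "(Re (complex_of_pair p), Im (complex_of_pair p)) = p"
  by (simp add: complex_of_pair_def)

lemma bounded_linear_complex_of_pair: "bounded_linear complex_of_pair"
  unfolding linear_conv_bounded_linear[symmetric]
  by (rule linearI) (simp_all add: complex_of_pair_def complex_eq_iff)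

lemma continuous_on_complex_of_pair [continuous_intros]:
  "continuous_on S f \<Longrightarrow> continuous_on S (\<lambda>x. complex_of_pair (f x))"
  by (rule bounded_linear.continuous_on[OF bounded_linear_complex_of_pair])

lemma mem_N_eps_iff:
  "p \<in> N_eps \<epsilon> \<longleftrightarrow> complex_of_pair p \<noteq> 0 \<and> (cmod (complex_of_pair p))^2 < \<epsilon>^2"
proof -
  have "(fst p)^2 + (snd p)^2 = (cmod (complex_of_pair p))^2"
    by (simp add: complex_of_pair_def cmod_power2)
  then show ?thesis
    unfolding N_eps_def by auto
qed

definition nullN :: "real \<Rightarrow> complex \<Rightarrow> real" where
  "nullN k w = Im w - k * Re w"

definition nullM :: "real \<Rightarrow> complex \<Rightarrow> real" where
  "nullM k w = Im w + k * Re w"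

lemma nullN_add: "nullN k (a + b) = nullN k a + nullN k b"
  and nullN_diff: "nullN k (a - b) = nullN k a - nullN k b"
  and nullN_scaleR: "nullN k (r *\<^sub>R a) = r * nullN k a"
  and nullM_add: "nullM k (a + b) = nullM k a + nullM k b"
  and nullM_diff: "nullM k (a - b) = nullM k a - nullM k b"
  and nullM_scaleR: "nullM k (r *\<^sub>R a) = r * nullM k a"
  by (simp_all add: nullN_def nullM_def algebra_simps)

lemma bounded_linear_nullN: "bounded_linear (nullN k)"
  and bounded_linear_nullM: "bounded_linear (nullM k)"
  unfolding nullN_def[abs_def] nullM_def[abs_def]
  by (auto intro!: bounded_linear_add bounded_linear_sub bounded_linear_const_mult
      bounded_linear_Re bounded_linear_Im)

lemma continuous_on_nullN [continuous_intros]: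
  "continuous_on S f \<Longrightarrow> continuous_on S (\<lambda>x. nullN k (f x))"
  and continuous_on_nullM [continuous_intros]:
  "continuous_on S f \<Longrightarrow> continuous_on S (\<lambda>x. nullM k (f x))"
  by (auto intro: bounded_linear.continuous_on[OF bounded_linear_nullN]
      bounded_linear.continuous_on[OF bounded_linear_nullM])

lemma nullN_square:
  assumes "\<mu>^2 = Complex 1 (-k)"
  shows "nullN k (z^2) = 2 * Re (\<mu> * z) * Im (\<mu> * z)"
proof -
  have "nullN k (z^2) = Im ((\<mu> * z)^2)"
    by (simp add: power_mult_distrib assms nullN_def)
  also have "\<dots> = 2 * Re (\<mu> * z) * Im (\<mu> * z)"
    by (simp only: Im_power2)
  finally show ?thesis .
qed

lemma fut_timelike_iff_null:
  assumes k: "0 < k" "k^2 = \<zeta> - 1"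
  shows "fut_timelike \<zeta> p v \<longleftrightarrow>
    0 < nullN k (2 * complex_of_pair p * complex_of_pair v) \<and>
    nullM k (2 * complex_of_pair p * complex_of_pair v) < 0"
proof -
  have \<zeta>: "\<zeta> = 1 + k^2"
    using k(2) by simp
  define P where "P = 2 * (fst p * fst v - snd p * snd v)"
  define Q where "Q = 2 * (fst p * snd v + snd p * fst v)"
  have g: "gmet \<zeta> p v = (Q - k * P) * (Q + k * P)"
    unfolding gmet_def P_def Q_def \<zeta> by (simp add: algebra_simps power2_eq_square)
  have f: "-2 * fst p * fst v + 2 * snd p * snd v = - P"
    unfolding P_def by simp
  have P: "0 < - P \<longleftrightarrow> Q + k * P < Q - k * P"
    using k(1) by (simp add: mult_less_0_iff)
  have sign: "a * b < 0 \<and> b < a \<longleftrightarrow> 0 < a \<and> b < 0" for a b :: real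
    by (auto simp: mult_less_0_iff)
  have "nullN k (2 * complex_of_pair p * complex_of_pair v) = Q - k * P"
    "nullM k (2 * complex_of_pair p * complex_of_pair v) = Q + k * P"
    unfolding nullN_def nullM_def complex_of_pair_def P_def Q_def by (simp_all add: algebra_simps)
  then show ?thesis
    unfolding fut_timelike_def g f P sign by simp
qed

lemma has_real_derivative_square_of_curve:
  assumes "bounded_linear L" and "(\<gamma> has_vector_derivative v) (at t)"
  shows "((\<lambda>t. L ((complex_of_pair (\<gamma> t))^2)) has_real_derivative
      L (2 * complex_of_pair (\<gamma> t) * complex_of_pair v)) (at t)"
proof -
  have z: "((\<lambda>t. complex_of_pair (\<gamma> t)) has_vector_derivative complex_of_pair v) (at t)"
    by (rule bounded_linear.has_vector_derivative[OF bounded_linear_complex_of_pair assms(2)])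
  have "((\<lambda>t. (complex_of_pair (\<gamma> t))^2) has_vector_derivative
      2 * complex_of_pair (\<gamma> t) * complex_of_pair v) (at t)"
    using has_vector_derivative_mult[OF z z] by (simp add: power2_eq_square algebra_simps)
  then show ?thesis
    unfolding has_real_derivative_iff_has_vector_derivative
    by (rule bounded_linear.has_vector_derivative[OF assms(1)])
qed

lemma timelike_curve_null_mono:
  assumes k: "0 < k" "k^2 = \<zeta> - 1" and cont: "continuous_on {0..1} \<gamma>"
    and curve: "\<And>t. 0 < t \<Longrightarrow> t < 1 \<Longrightarrow>
      (\<gamma> has_vector_derivative \<gamma>' t) (at t) \<and> fut_timelike \<zeta> (\<gamma> t) (\<gamma>' t)"
    and st: "0 \<le> s" "s < t" "t \<le> 1"
  shows "nullN k ((complex_of_pair (\<gamma> s))^2) < nullN k ((complex_of_pair (\<gamma> t))^2) \<and>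
    nullM k ((complex_of_pair (\<gamma> t))^2) < nullM k ((complex_of_pair (\<gamma> s))^2)"
proof -
  have increasing: "L ((complex_of_pair (\<gamma> s))^2) < L ((complex_of_pair (\<gamma> t))^2)"
    if L: "bounded_linear L"
      and pos: "\<And>x. fut_timelike \<zeta> (\<gamma> x) (\<gamma>' x) \<Longrightarrow>
        0 < L (2 * complex_of_pair (\<gamma> x) * complex_of_pair (\<gamma>' x))" for L :: "complex \<Rightarrow> real"
  proof (rule DERIV_pos_imp_increasing_open[OF st(2), where f = "\<lambda>t. L ((complex_of_pair (\<gamma> t))^2)"])
    have "continuous_on {s..t} \<gamma>"
      using st by (intro continuous_on_subset[OF cont]) auto
    then have "continuous_on {s..t} (\<lambda>t. (complex_of_pair (\<gamma> t))^2)"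
      by (intro continuous_on_power continuous_on_complex_of_pair)
    then show "continuous_on {s..t} (\<lambda>t. L ((complex_of_pair (\<gamma> t))^2))"
      by (rule bounded_linear.continuous_on[OF L])
    fix x assume "s < x" "x < t"
    then have "(\<gamma> has_vector_derivative \<gamma>' x) (at x)" "fut_timelike \<zeta> (\<gamma> x) (\<gamma>' x)"
      using curve[of x] st by auto
    then show "\<exists>y. ((\<lambda>t. L ((complex_of_pair (\<gamma> t))^2)) has_real_derivative y) (at x) \<and> 0 < y"
      using has_real_derivative_square_of_curve[OF L] pos by blast
  qed
  show ?thesis
    using increasing[OF bounded_linear_nullN] increasing[OF bounded_linear_minus[OF bounded_linear_nullM]]
    unfolding fut_timelike_iff_null[OF k] by auto
qed

lemma chron_curve:
  assumes k: "0 < k" "k^2 = \<zeta> - 1" and "chron \<epsilon> \<zeta> p q"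
  obtains \<gamma> :: "real \<Rightarrow> real \<times> real"
  where "\<gamma> 0 = p" "\<gamma> 1 = q" "continuous_on {0..1} \<gamma>" "\<And>t. t \<in> {0..1} \<Longrightarrow> \<gamma> t \<in> N_eps \<epsilon>"
    "\<And>s t. 0 \<le> s \<Longrightarrow> s < t \<Longrightarrow> t \<le> 1 \<Longrightarrow>
       nullN k ((complex_of_pair (\<gamma> s))^2) < nullN k ((complex_of_pair (\<gamma> t))^2) \<and>
       nullM k ((complex_of_pair (\<gamma> t))^2) < nullM k ((complex_of_pair (\<gamma> s))^2)"
proof -
  obtain \<gamma> \<gamma>' where ends: "\<gamma> 0 = p" "\<gamma> 1 = q"
    and curve: "\<And>t. t \<in> {0..1} \<Longrightarrow> \<gamma> t \<in> N_eps \<epsilon> \<and>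
        (\<gamma> has_vector_derivative \<gamma>' t) (at t within {0..1}) \<and> fut_timelike \<zeta> (\<gamma> t) (\<gamma>' t)"
    using assms(3) unfolding chron_def by blast
  have cont: "continuous_on {0..1} \<gamma>"
    by (rule continuous_on_vector_derivative) (use curve in blast)
  have "(\<gamma> has_vector_derivative \<gamma>' t) (at t) \<and> fut_timelike \<zeta> (\<gamma> t) (\<gamma>' t)"
    if "0 < t" "t < 1" for t
  proof -
    have "at t within {0..1} = at t"
      using that by (intro at_within_interior) simp
    then show ?thesis
      using curve[of t] that by simp
  qed
  with cont show ?thesis
    using that[OF ends cont] curve timelike_curve_null_mono[OF k cont] by blast
qed

lemma chron_crosses_null_line:
  assumes k: "0 < k" "k^2 = \<zeta> - 1" and \<mu>: "\<mu>^2 = Complex 1 (-k)" and "chron \<epsilon> \<zeta> p q"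
    and sign_change: "Re (\<mu> * complex_of_pair p) * Re (\<mu> * complex_of_pair q) \<le> 0"
  shows "Re (\<mu> * complex_of_pair p) = 0 \<or> nullN k ((complex_of_pair p)^2) < 0"
    and "Re (\<mu> * complex_of_pair q) = 0 \<or> 0 < nullN k ((complex_of_pair q)^2)"
proof -
  obtain \<gamma> :: "real \<Rightarrow> real \<times> real" where ends: "\<gamma> 0 = p" "\<gamma> 1 = q"
    and cont: "continuous_on {0..1} \<gamma>" and "\<And>t. t \<in> {0..1} \<Longrightarrow> \<gamma> t \<in> N_eps \<epsilon>"
    and mono: "\<And>s t. 0 \<le> s \<Longrightarrow> s < t \<Longrightarrow> t \<le> 1 \<Longrightarrow>
       nullN k ((complex_of_pair (\<gamma> s))^2) < nullN k ((complex_of_pair (\<gamma> t))^2) \<and>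
       nullM k ((complex_of_pair (\<gamma> t))^2) < nullM k ((complex_of_pair (\<gamma> s))^2)"
    by (fact chron_curve[OF k assms(4)])
  define f where "f t = Re (\<mu> * complex_of_pair (\<gamma> t))" for t
  have cont_f: "continuous_on {0..1} f"
    unfolding f_def by (intro continuous_intros cont)
  have "f 0 \<le> 0 \<and> 0 \<le> f 1 \<or> f 1 \<le> 0 \<and> 0 \<le> f 0"
    using sign_change unfolding f_def ends mult_le_0_iff by blast
  then obtain x where x: "0 \<le> x" "x \<le> 1" "f x = 0"
    using IVT'[of f 0 0 1, OF _ _ _ cont_f] IVT2'[of f 1 0 0, OF _ _ _ cont_f] by force
  have null_x: "nullN k ((complex_of_pair (\<gamma> x))^2) = 0"
    using nullN_square[OF \<mu>] x(3) unfolding f_def by simp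
  show "Re (\<mu> * complex_of_pair p) = 0 \<or> nullN k ((complex_of_pair p)^2) < 0"
  proof (cases "x = 0")
    case True
    then show ?thesis using x(3) ends unfolding f_def by simp
  next
    case False
    then show ?thesis using mono[of 0 x] x null_x ends by simp
  qed
  show "Re (\<mu> * complex_of_pair q) = 0 \<or> 0 < nullN k ((complex_of_pair q)^2)"
  proof (cases "x = 1")
    case True
    then show ?thesis using x(3) ends unfolding f_def by simp
  next
    case False
    then show ?thesis using mono[of x 1] x null_x ends by simp
  qed
qed

definition detour_weight :: "real \<Rightarrow> real \<Rightarrow> real" where
  "detour_weight h t = h * t^2 / (1 + h - t)"

lemma detour_weight_bounds:
  assumes "0 < h" "0 \<le> t" "t \<le> 1"
  shows "0 \<le> detour_weight h t" "(1 - t)^2 + detour_weight h t \<le> 1"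
proof -
  have den: "0 < 1 + h - t"
    using assms by simp
  then show "0 \<le> detour_weight h t"
    unfolding detour_weight_def using assms by simp
  have "detour_weight h t \<le> t^2"
    unfolding detour_weight_def using assms den
    by (simp add: divide_le_eq power2_eq_square algebra_simps mult_left_le_one_le)
  then show "(1 - t)^2 + detour_weight h t \<le> 1"
    using assms mult_left_le_one_le[of t t] by (simp add: power2_eq_square algebra_simps)
qed

lemma le_detour_weight_imp:
  assumes "0 < h" "0 < s" "s \<le> 1" "0 \<le> t" "t \<le> 1" and "s \<le> detour_weight h t"
  shows "s * (1 - t) \<le> h"
proof -
  have "s * (1 + h - t) \<le> h * t^2"
    using assms by (simp add: detour_weight_def le_divide_eq)
  also have "\<dots> \<le> h"
    using assms by (simp add: power_le_one mult_left_le)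
  finally have "s * (1 - t) \<le> h * (1 - s)"
    by (simp add: algebra_simps)
  also have "\<dots> \<le> h"
    using assms by (simp add: mult_left_le)
  finally show ?thesis .
qed

text \<open>
  A smooth path from \<open>w0\<close> to \<open>w2\<close> that bends towards \<open>w1\<close>: the weight of \<open>w0\<close> decreases and
  that of \<open>w2\<close> increases, never both with zero speed.
\<close>
definition detour :: "real \<Rightarrow> complex \<Rightarrow> complex \<Rightarrow> complex \<Rightarrow> real \<Rightarrow> complex" where
  "detour h w0 w1 w2 t =
    (1 - (1 - t)^2 - detour_weight h t) *\<^sub>R w1 + (1 - t)^2 *\<^sub>R w0 + detour_weight h t *\<^sub>R w2"

definition detour_velocity :: "real \<Rightarrow> complex \<Rightarrow> complex \<Rightarrow> complex \<Rightarrow> real \<Rightarrow> complex" where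
  "detour_velocity h w0 w1 w2 t =
    (2 * (1 - t)) *\<^sub>R (w1 - w0) + (h * t * (2 + 2 * h - t) / (1 + h - t)^2) *\<^sub>R (w2 - w1)"

lemma detour_0 [simp]: "detour h w0 w1 w2 0 = w0"
  and detour_1 [simp]: "0 < h \<Longrightarrow> detour h w0 w1 w2 1 = w2"
  by (simp_all add: detour_def detour_weight_def)

lemma nullN_detour: "nullN k (detour h w0 w1 w2 t) =
    (1 - (1 - t)^2 - detour_weight h t) * nullN k w1 + (1 - t)^2 * nullN k w0 + detour_weight h t * nullN k w2"
  and nullM_detour: "nullM k (detour h w0 w1 w2 t) =
    (1 - (1 - t)^2 - detour_weight h t) * nullM k w1 + (1 - t)^2 * nullM k w0 + detour_weight h t * nullM k w2"
  unfolding detour_def nullN_add nullN_scaleR nullM_add nullM_scaleR by (rule refl)+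

lemma has_vector_derivative_detour:
  assumes "0 < h" "t \<le> 1"
  shows "(detour h w0 w1 w2 has_vector_derivative detour_velocity h w0 w1 w2 t) (at t within S)"
proof -
  have "1 + h - t \<noteq> 0"
    using assms by simp
  then have "(detour_weight h has_real_derivative h * t * (2 + 2 * h - t) / (1 + h - t)^2)
      (at t within S)"
    unfolding detour_weight_def[abs_def]
    by (auto intro!: derivative_eq_intros simp: power2_eq_square field_simps)
  then show ?thesis
    unfolding detour_def[abs_def] detour_velocity_def
    by (auto intro!: derivative_eq_intros simp: algebra_simps)
qed

lemma continuous_on_detour_velocity: "0 < h \<Longrightarrow> continuous_on {0..1} (detour_velocity h w0 w1 w2)"
  unfolding detour_velocity_def[abs_def] by (auto intro!: continuous_intros)

lemma detour_in_convex_hull: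
  assumes "0 < h" "t \<in> {0..1}"
  shows "detour h w0 w1 w2 t \<in> convex hull {w0, w1, w2}"
  unfolding convex_hull_3 detour_def using detour_weight_bounds[of h t] assms
  by (intro CollectI exI[of _ "(1 - t)^2"] exI[of _ "1 - (1 - t)^2 - detour_weight h t"]
      exI[of _ "detour_weight h t"]) (auto simp: add_ac)

lemma detour_velocity_timelike:
  assumes N: "nullN k w0 < nullN k w1" "nullN k w1 < nullN k w2"
    and M: "nullM k w2 < nullM k w1" "nullM k w1 < nullM k w0"
    and "0 < h" "t \<in> {0..1}"
  shows "0 < nullN k (detour_velocity h w0 w1 w2 t) \<and> nullM k (detour_velocity h w0 w1 w2 t) < 0"
proof -
  define a b where "a = 2 * (1 - t)" and "b = h * t * (2 + 2 * h - t) / (1 + h - t)^2"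
  have "0 \<le> a" "0 \<le> b"
    using assms(5,6) unfolding a_def b_def by (auto intro!: divide_nonneg_nonneg mult_nonneg_nonneg)
  moreover have "0 < a \<or> 0 < b"
  proof (cases "t < 1")
    case True
    then show ?thesis
      unfolding a_def by simp
  next
    case False
    then have "t = 1"
      using assms(6) by simp
    then show ?thesis
      using assms(5) unfolding b_def by simp
  qed
  ultimately have "0 \<le> a * (nullN k w1 - nullN k w0)" "0 \<le> b * (nullN k w2 - nullN k w1)"
    "a * (nullM k w1 - nullM k w0) \<le> 0" "b * (nullM k w2 - nullM k w1) \<le> 0"
    "0 < a * (nullN k w1 - nullN k w0) \<and> a * (nullM k w1 - nullM k w0) < 0 \<or>
     0 < b * (nullN k w2 - nullN k w1) \<and> b * (nullM k w2 - nullM k w1) < 0"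
    using N M by (auto simp: mult_nonneg_nonpos mult_pos_neg)
  moreover have "nullN k (detour_velocity h w0 w1 w2 t) =
      a * (nullN k w1 - nullN k w0) + b * (nullN k w2 - nullN k w1)"
    "nullM k (detour_velocity h w0 w1 w2 t) =
      a * (nullM k w1 - nullM k w0) + b * (nullM k w2 - nullM k w1)"
    unfolding detour_velocity_def a_def b_def
    by (simp_all add: nullN_add nullN_diff nullN_scaleR nullM_add nullM_diff nullM_scaleR)
  ultimately show ?thesis
    by linarith
qed

text \<open>
  For this value of \<open>h\<close> the weight \<open>(1 - t)^2\<close> of \<open>w0\<close> is already negligible when \<open>N\<close>
  reaches \<open>0\<close>, so the detour crosses the line \<open>N = 0\<close> where \<open>M < 0\<close>.
\<close>
lemma detour_crosses_null_line_below_origin: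
  assumes N: "nullN k w0 < nullN k w1" "nullN k w1 < 0" "0 < nullN k w2"
    and M: "nullM k w2 < nullM k w1" "nullM k w1 < 0" "0 < nullM k w0"
    and h: "h = (nullN k w1 / (nullN k w2 - nullN k w1))^2 * (nullM k w2 / (nullM k w2 - nullM k w0))"
    and t: "0 \<le> t" "t \<le> 1" and null: "nullN k (detour h w0 w1 w2 t) = 0"
  shows "nullM k (detour h w0 w1 w2 t) < 0"
proof -
  define N0 N1 N2 where "N0 = nullN k w0" and "N1 = nullN k w1" and "N2 = nullN k w2"
  define M0 M1 M2 where "M0 = nullM k w0" and "M1 = nullM k w1" and "M2 = nullM k w2"
  define \<phi> \<psi> where "\<phi> = (1 - t)^2" and "\<psi> = detour_weight h t"
  define s m where "s = - N1 / (N2 - N1)" and "m = M2 / (M2 - M0)"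
  have s: "0 < s" "s \<le> 1" and m: "0 < m" "m < 1" "m * M0 < - M2"
    using N M unfolding s_def m_def N0_def N1_def N2_def M0_def M1_def M2_def
    by (auto simp: field_simps mult_neg_neg)
  have h_eq: "h = s^2 * m"
    unfolding h s_def m_def N1_def N2_def M0_def M2_def by (simp add: power2_eq_square)
  have weights: "0 \<le> \<phi>" "0 \<le> \<psi>" "\<phi> + \<psi> \<le> 1"
    using detour_weight_bounds[of h t] h_eq s m t unfolding \<phi>_def \<psi>_def by simp_all
  have "(1 - \<phi> - \<psi>) * N1 + \<phi> * N0 + \<psi> * N2 = 0"
    using null unfolding nullN_detour \<phi>_def \<psi>_def N0_def N1_def N2_def .
  then have N_w: "\<psi> * (N2 - N1) = - N1 - \<phi> * (N0 - N1)"
    by (simp add: algebra_simps)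
  have "\<phi> * (N0 - N1) \<le> 0"
    using N weights unfolding N0_def N1_def by (simp add: mult_nonneg_nonpos)
  then have "s \<le> \<psi>"
    unfolding s_def using N N_w pos_divide_le_eq[of "N2 - N1" "- N1" \<psi>]
    unfolding N0_def N1_def N2_def by simp
  then have "s * (1 - t) \<le> s^2 * m"
    using le_detour_weight_imp[of h s t] h_eq s m t unfolding \<psi>_def by simp
  then have "(s * (1 - t))^2 \<le> (s^2 * m)^2"
    using s t by (intro power_mono) auto
  then have "\<phi> \<le> s^2 * m^2"
    unfolding \<phi>_def using s by (simp add: power_mult_distrib power2_eq_square mult_le_cancel_left_pos ac_simps)
  also have "\<dots> \<le> s * m"
    using s m by (simp add: power2_eq_square mult_le_one mult_mono)
  finally have "\<phi> * M0 \<le> s * (m * M0)"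
    using M unfolding M0_def by (simp add: mult_right_mono mult.assoc)
  also have "\<dots> < s * (- M2)"
    using s m by (intro mult_strict_left_mono)
  finally have "\<phi> * M0 < s * (- M2)" .
  moreover have "\<psi> * M2 \<le> s * M2"
    using \<open>s \<le> \<psi>\<close> M unfolding M2_def by (simp add: mult_right_mono_neg)
  moreover have "(1 - \<phi> - \<psi>) * M1 \<le> 0"
    using weights M unfolding M1_def by (simp add: mult_nonneg_nonpos)
  moreover have "nullM k (detour h w0 w1 w2 t) = (1 - \<phi> - \<psi>) * M1 + \<phi> * M0 + \<psi> * M2"
    unfolding nullM_detour \<phi>_def \<psi>_def M0_def M1_def M2_def ..
  ultimately show ?thesis
    by linarith
qed

lemma minus_mult_notin_nonpos_Reals:
  assumes k: "0 < k" and \<mu>: "\<mu>^2 = Complex 1 (-k)"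
    and below: "nullN k w = 0 \<Longrightarrow> nullM k w < 0"
  shows "- (\<mu>^2) * w \<notin> \<real>\<^sub>\<le>\<^sub>0"
proof
  assume "- (\<mu>^2) * w \<in> \<real>\<^sub>\<le>\<^sub>0"
  then have "nullN k w = 0" and "0 \<le> Re w + k * Im w"
    unfolding complex_nonpos_Reals_iff \<mu> nullN_def by (simp_all add: algebra_simps)
  moreover from this(1) have "Im w = k * Re w"
    unfolding nullN_def by simp
  ultimately have "0 \<le> (1 + k^2) * Re w" and "nullM k w < 0"
    using below by (simp_all add: power2_eq_square algebra_simps)
  moreover have "0 < 1 + k^2"
    by (intro add_pos_nonneg) auto
  ultimately show False
    using k \<open>Im w = k * Re w\<close> unfolding nullM_def
    by (simp add: zero_le_mult_iff add_pos_nonneg mult_less_0_iff)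
qed

lemma has_vector_derivative_csqrt:
  assumes "(X has_vector_derivative X') (at t within S)" and "X t \<notin> \<real>\<^sub>\<le>\<^sub>0"
  shows "((\<lambda>t. csqrt (X t)) has_vector_derivative X' / (2 * csqrt (X t))) (at t within S)"
proof -
  have "((csqrt \<circ> X) has_vector_derivative X' * inverse (2 * csqrt (X t))) (at t within S)"
    by (rule field_vector_diff_chain_within[OF assms(1)])
      (rule has_field_derivative_at_within[OF has_field_derivative_csqrt[OF assms(2)]])
  then show ?thesis
    unfolding o_def divide_inverse .
qed

lemma chron_of_complex_curve:
  assumes k: "0 < k" "k^2 = \<zeta> - 1" and cont_z': "continuous_on {0..1} z'"
    and deriv: "\<And>t. t \<in> {0..1} \<Longrightarrow> (z has_vector_derivative z' t) (at t within {0..1})"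
    and inside: "\<And>t. t \<in> {0..1} \<Longrightarrow> z t \<noteq> 0 \<and> (cmod (z t))^2 < \<epsilon>^2"
    and timelike: "\<And>t. t \<in> {0..1} \<Longrightarrow> 0 < nullN k (2 * z t * z' t) \<and> nullM k (2 * z t * z' t) < 0"
  shows "chron \<epsilon> \<zeta> (Re (z 0), Im (z 0)) (Re (z 1), Im (z 1))"
  unfolding chron_def
proof (intro exI conjI ballI)
  show "continuous_on {0..1} (\<lambda>t. (Re (z' t), Im (z' t)))"
    by (intro continuous_intros cont_z')
  fix t :: real assume t: "t \<in> {0..1}"
  show "(Re (z t), Im (z t)) \<in> N_eps \<epsilon>"
    unfolding mem_N_eps_iff using inside[OF t] by simp
  show "((\<lambda>t. (Re (z t), Im (z t))) has_vector_derivative (Re (z' t), Im (z' t))) (at t within {0..1})"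
    by (rule bounded_linear.has_vector_derivative[OF
          bounded_linear_Pair[OF bounded_linear_Re bounded_linear_Im] deriv[OF t]])
  show "fut_timelike \<zeta> (Re (z t), Im (z t)) (Re (z' t), Im (z' t))"
    unfolding fut_timelike_iff_null[OF k] using timelike[OF t] by simp
qed simp_all

text \<open>
  The branch \<open>z = csqrt (- \<mu>^2 w) / (i \<mu>)\<close> of \<open>sqrt w\<close> maps the plane cut along the ray
  \<open>N = 0 \<le> M\<close> onto the half plane \<open>Im (\<mu> z) < 0\<close>.
\<close>
lemma chron_of_timelike_square_curve:
  assumes k: "0 < k" "k^2 = \<zeta> - 1" and \<mu>: "\<mu>^2 = Complex 1 (-k)"
    and ends: "w 0 = (complex_of_pair p)^2" "w 1 = (complex_of_pair q)^2"
    and half_plane: "Im (\<mu> * complex_of_pair p) < 0" "Im (\<mu> * complex_of_pair q) < 0"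
    and cont_w': "continuous_on {0..1} w'"
    and deriv: "\<And>t. t \<in> {0..1} \<Longrightarrow> (w has_vector_derivative w' t) (at t within {0..1})"
    and timelike: "\<And>t. t \<in> {0..1} \<Longrightarrow> 0 < nullN k (w' t) \<and> nullM k (w' t) < 0"
    and small: "\<And>t. t \<in> {0..1} \<Longrightarrow> cmod (w t) < \<epsilon>^2"
    and below: "\<And>t. t \<in> {0..1} \<Longrightarrow> nullN k (w t) = 0 \<Longrightarrow> nullM k (w t) < 0"
  shows "chron \<epsilon> \<zeta> p q"
proof -
  have \<mu>0: "\<mu> \<noteq> 0"
    using \<mu> by (auto simp: complex_eq_iff)
  define X where "X t = - (\<mu>^2) * w t" for t
  define z where "z t = csqrt (X t) / (\<i> * \<mu>)" for t
  define z' where "z' t = w' t / (2 * z t)" for t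
  have X: "X t \<notin> \<real>\<^sub>\<le>\<^sub>0" if "t \<in> {0..1}" for t
    unfolding X_def using minus_mult_notin_nonpos_Reals[OF k(1) \<mu> below[OF that]] .
  have z_nonzero: "z t \<noteq> 0" if "t \<in> {0..1}" for t
    using X[OF that] \<mu>0 unfolding z_def by auto
  have z_square: "(z t)^2 = w t" for t
    unfolding z_def X_def using \<mu>0 by (simp add: power_divide power_mult_distrib)
  have dz: "(z has_vector_derivative z' t) (at t within {0..1})" if t: "t \<in> {0..1}" for t
  proof -
    have "(X has_vector_derivative - (\<mu>^2) * w' t) (at t within {0..1})"
      unfolding X_def[abs_def] by (rule has_vector_derivative_mult_right[OF deriv[OF t]])
    then have "(z has_vector_derivative - (\<mu>^2) * w' t / (2 * csqrt (X t)) / (\<i> * \<mu>))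
        (at t within {0..1})"
      unfolding z_def[abs_def] by (intro derivative_intros has_vector_derivative_csqrt X[OF t])
    moreover have "csqrt (X t) = \<i> * \<mu> * z t"
      unfolding z_def using \<mu>0 by simp
    ultimately show ?thesis
      unfolding z'_def using \<mu>0 z_nonzero[OF t] by (simp add: field_simps power2_eq_square)
  qed
  have "z 0 = complex_of_pair p" "z 1 = complex_of_pair q"
  proof -
    have "X 0 = (\<i> * \<mu> * complex_of_pair p)^2" "X 1 = (\<i> * \<mu> * complex_of_pair q)^2"
      unfolding X_def ends by (simp_all add: power_mult_distrib)
    moreover have "0 < Re (\<i> * \<mu> * complex_of_pair p)" "0 < Re (\<i> * \<mu> * complex_of_pair q)"
      using half_plane by simp_all
    ultimately show "z 0 = complex_of_pair p" "z 1 = complex_of_pair q"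
      unfolding z_def using \<mu>0 by (simp_all add: csqrt_square)
  qed
  moreover have "continuous_on {0..1} z'"
    unfolding z'_def[abs_def] using z_nonzero continuous_on_vector_derivative[OF dz]
    by (intro continuous_intros cont_w') auto
  moreover have "2 * z t * z' t = w' t" if "t \<in> {0..1}" for t
    unfolding z'_def using z_nonzero[OF that] by simp
  ultimately show ?thesis
    using chron_of_complex_curve[OF k _ dz, of \<epsilon>] z_nonzero small timelike
    by (simp add: norm_power[symmetric] z_square)
qed

lemma null_corner_exists:
  assumes "0 < k" "nullN k w0 < 0" "nullM k w2 < 0" "cmod w0 < R"
  obtains w1 where "nullN k w0 < nullN k w1" "nullN k w1 < 0"
    "nullM k w2 < nullM k w1" "nullM k w1 < 0" "cmod w1 < R"
proof -
  define corner where
    "corner = Complex ((nullM k w2 - nullN k w0) / (2 * k)) ((nullN k w0 + nullM k w2) / 2)"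
  have corner: "nullN k corner = nullN k w0" "nullM k corner = nullM k w2"
    unfolding corner_def nullN_def nullM_def using assms(1) by (simp_all add: field_simps)
  define r where "r = R / (R + cmod corner)"
  have "0 < R"
    using assms(4) norm_ge_zero[of w0] by linarith
  moreover have "corner \<noteq> 0"
    using assms(2) corner(1) by (auto simp: nullN_def)
  ultimately have r: "0 < r" "r < 1" and "cmod (r *\<^sub>R corner) < R"
    unfolding r_def by (simp_all add: field_simps add_pos_pos)
  moreover have "nullN k w0 < nullN k (r *\<^sub>R corner)" "nullN k (r *\<^sub>R corner) < 0"
    "nullM k w2 < nullM k (r *\<^sub>R corner)" "nullM k (r *\<^sub>R corner) < 0"
    using r assms(2,3) unfolding nullN_scaleR nullM_scaleR corner
    by (simp_all add: mult_less_cancel_right_neg mult_pos_neg)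
  ultimately show ?thesis
    by (intro that[of "r *\<^sub>R corner"])
qed

lemma chron_between_null_quadrants:
  assumes k: "0 < k" "k^2 = \<zeta> - 1" and \<mu>: "\<mu>^2 = Complex 1 (-k)"
    and p: "nullN k ((complex_of_pair p)^2) < 0" "0 < nullM k ((complex_of_pair p)^2)"
      "Im (\<mu> * complex_of_pair p) < 0" "(cmod (complex_of_pair p))^2 < \<epsilon>^2"
    and q: "0 < nullN k ((complex_of_pair q)^2)" "nullM k ((complex_of_pair q)^2) < 0"
      "Im (\<mu> * complex_of_pair q) < 0" "(cmod (complex_of_pair q))^2 < \<epsilon>^2"
  shows "chron \<epsilon> \<zeta> p q"
proof -
  define w0 w2 where "w0 = (complex_of_pair p)^2" and "w2 = (complex_of_pair q)^2"
  have small: "cmod w0 < \<epsilon>^2" "cmod w2 < \<epsilon>^2"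
    using p(4) q(4) unfolding w0_def w2_def by (simp_all add: norm_power)
  obtain w1 where N: "nullN k w0 < nullN k w1" "nullN k w1 < 0" "0 < nullN k w2"
    and M: "nullM k w2 < nullM k w1" "nullM k w1 < 0" "0 < nullM k w0" and "cmod w1 < \<epsilon>^2"
    using null_corner_exists[OF k(1) _ _ small(1)] p(1,2) q(1,2) unfolding w0_def w2_def by blast
  define h where
    "h = (nullN k w1 / (nullN k w2 - nullN k w1))^2 * (nullM k w2 / (nullM k w2 - nullM k w0))"
  have "0 < (nullN k w1 / (nullN k w2 - nullN k w1))^2" "0 < nullM k w2 / (nullM k w2 - nullM k w0)"
    using N M by (simp_all add: divide_neg_neg)
  then have h: "0 < h"
    unfolding h_def by (rule mult_pos_pos)
  have "convex hull {w0, w1, w2} \<subseteq> ball 0 (\<epsilon>^2)"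
    using small \<open>cmod w1 < \<epsilon>^2\<close> by (intro hull_minimal convex_ball) auto
  then have "cmod (detour h w0 w1 w2 t) < \<epsilon>^2" if "t \<in> {0..1}" for t
    using detour_in_convex_hull[OF h that, of w0 w1 w2] by auto
  moreover have "0 < nullN k (detour_velocity h w0 w1 w2 t) \<and> nullM k (detour_velocity h w0 w1 w2 t) < 0"
    if "t \<in> {0..1}" for t
    using detour_velocity_timelike[OF _ _ _ _ h that] N M by simp
  moreover note detour_crosses_null_line_below_origin[OF N M h_def]
  ultimately show ?thesis
    using h p(3) q(3)
    by (intro chron_of_timelike_square_curve[OF k \<mu>,
          where w = "detour h w0 w1 w2" and w' = "detour_velocity h w0 w1 w2"])
      (auto simp: w0_def w2_def has_vector_derivative_detour continuous_on_detour_velocity)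
qed

lemma past_of_null_point:
  assumes k: "0 < k" "k^2 = \<zeta> - 1" and \<mu>: "\<mu>^2 = Complex 1 (-k)"
    and a: "0 < Re (\<mu> * complex_of_pair a)" "Im (\<mu> * complex_of_pair a) = 0"
      "0 < nullM k ((complex_of_pair a)^2)"
    and "chron \<epsilon> \<zeta> p a"
  shows "nullN k ((complex_of_pair p)^2) < 0" "0 < nullM k ((complex_of_pair p)^2)"
    "Im (\<mu> * complex_of_pair p) < 0" "(cmod (complex_of_pair p))^2 < \<epsilon>^2"
proof -
  obtain \<gamma> :: "real \<Rightarrow> real \<times> real" where ends: "\<gamma> 0 = p" "\<gamma> 1 = a"
    and "continuous_on {0..1} \<gamma>" and in_N: "\<And>t. t \<in> {0..1} \<Longrightarrow> \<gamma> t \<in> N_eps \<epsilon>"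
    and mono: "\<And>s t. 0 \<le> s \<Longrightarrow> s < t \<Longrightarrow> t \<le> 1 \<Longrightarrow>
       nullN k ((complex_of_pair (\<gamma> s))^2) < nullN k ((complex_of_pair (\<gamma> t))^2) \<and>
       nullM k ((complex_of_pair (\<gamma> t))^2) < nullM k ((complex_of_pair (\<gamma> s))^2)"
    by (fact chron_curve[OF k \<open>chron \<epsilon> \<zeta> p a\<close>])
  have null_a: "nullN k ((complex_of_pair a)^2) = 0"
    using nullN_square[OF \<mu>] a(2) by simp
  show N_p: "nullN k ((complex_of_pair p)^2) < 0" and "0 < nullM k ((complex_of_pair p)^2)"
    using mono[of 0 1] ends null_a a(3) by auto
  show "(cmod (complex_of_pair p))^2 < \<epsilon>^2"
    using in_N[of 0] ends unfolding mem_N_eps_iff by simp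
  have "0 < Re (\<mu> * complex_of_pair p)"
  proof (rule ccontr)
    assume "\<not> 0 < Re (\<mu> * complex_of_pair p)"
    then have "Re (\<mu> * complex_of_pair p) * Re (\<mu> * complex_of_pair a) \<le> 0"
      using a(1) by (simp add: mult_nonpos_nonneg)
    then show False
      using chron_crosses_null_line(2)[OF k \<mu> \<open>chron \<epsilon> \<zeta> p a\<close>] a(1) null_a by simp
  qed
  then show "Im (\<mu> * complex_of_pair p) < 0"
    using N_p nullN_square[OF \<mu>] by (simp add: mult_less_0_iff)
qed

lemma not_chron_across_null_line:
  assumes k: "0 < k" "k^2 = \<zeta> - 1" and \<mu>: "\<mu>^2 = Complex 1 (-k)"
    and a: "0 < Re (\<mu> * complex_of_pair a)" "Im (\<mu> * complex_of_pair a) = 0"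
    and q: "Re (\<mu> * complex_of_pair q) < 0"
  shows "\<not> chron \<epsilon> \<zeta> a q"
proof
  assume aq: "chron \<epsilon> \<zeta> a q"
  have "Re (\<mu> * complex_of_pair a) * Re (\<mu> * complex_of_pair q) \<le> 0"
    using a(1) q by (simp add: mult_pos_neg less_imp_le)
  then have "nullN k ((complex_of_pair a)^2) < 0"
    using chron_crosses_null_line(1)[OF k \<mu> aq] a(1) by simp
  then show False
    using nullN_square[OF \<mu>] a(2) by simp
qed

lemma future_quadrant_in_up_past:
  assumes k: "0 < k" "k^2 = \<zeta> - 1" and \<mu>: "\<mu>^2 = Complex 1 (-k)"
    and a: "0 < Re (\<mu> * complex_of_pair a)" "Im (\<mu> * complex_of_pair a) = 0"
      "0 < nullM k ((complex_of_pair a)^2)"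
    and q: "0 < nullN k ((complex_of_pair q)^2)" "nullM k ((complex_of_pair q)^2) < 0"
      "Im (\<mu> * complex_of_pair q) < 0" "(cmod (complex_of_pair q))^2 < \<epsilon>^2"
  shows "q \<in> up \<epsilon> \<zeta> (Ipast \<epsilon> \<zeta> a)"
proof -
  define V where "V = {q. 0 < nullN k ((complex_of_pair q)^2) \<and> nullM k ((complex_of_pair q)^2) < 0 \<and>
      Im (\<mu> * complex_of_pair q) < 0 \<and> (cmod (complex_of_pair q))^2 < \<epsilon>^2}"
  have "open V"
    unfolding V_def by (intro open_Collect_conj open_Collect_less continuous_intros continuous_on_id)
  moreover have "q \<in> V"
    unfolding V_def using q by simp
  moreover have "V \<subseteq> {c \<in> N_eps \<epsilon>. \<forall>u\<in>Ipast \<epsilon> \<zeta> a. chron \<epsilon> \<zeta> u c}"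
  proof (intro subsetI CollectI conjI ballI)
    fix p u assume "p \<in> V" and "u \<in> Ipast \<epsilon> \<zeta> a"
    then have p: "0 < nullN k ((complex_of_pair p)^2)" "nullM k ((complex_of_pair p)^2) < 0"
        "Im (\<mu> * complex_of_pair p) < 0" "(cmod (complex_of_pair p))^2 < \<epsilon>^2"
      and "chron \<epsilon> \<zeta> u a"
      unfolding V_def Ipast_def by simp_all
    then show "chron \<epsilon> \<zeta> u p"
      using chron_between_null_quadrants[OF k \<mu> past_of_null_point[OF k \<mu> a \<open>chron \<epsilon> \<zeta> u a\<close>] p]
      by blast
  next
    fix p assume "p \<in> V"
    then show "p \<in> N_eps \<epsilon>"
      unfolding V_def mem_N_eps_iff by (auto simp: nullN_def)
  qed
  ultimately show ?thesis
    unfolding up_def by (rule interiorI)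
qed

lemma sqrt_in_first_quadrant:
  assumes "w^2 = z" "0 \<le> Re w" "0 < Im z"
  shows "0 < Re w" "0 < Im w"
proof -
  have "2 * Re w * Im w = Im z"
    using assms(1) by (simp only: Im_power2[symmetric])
  then have "0 < Re w * Im w"
    using assms(3) by simp
  then show "0 < Re w"
    using assms(2) by (cases "Re w = 0") auto
  then show "0 < Im w"
    using \<open>0 < Re w * Im w\<close> by (simp add: zero_less_mult_iff)
qed

text \<open>
  With \<open>\<nu> = csqrt (1 + i k)\<close> and \<open>\<mu> = cnj \<nu>\<close>, the point \<open>a = r \<nu>\<close> has \<open>\<mu> a = r |\<nu>|^2 > 0\<close>
  and \<open>a^2 = r^2 (1 + i k)\<close>.
\<close>
lemma null_ray_point_exists:
  assumes "0 < k" "0 < \<epsilon>"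
  obtains \<mu> a where "\<mu>^2 = Complex 1 (-k)" "0 < Re \<mu>" "Im \<mu> < 0"
    "0 < Re (\<mu> * a)" "Im (\<mu> * a) = 0" "0 < nullM k (a^2)" "cmod a = \<epsilon> / 2"
proof -
  define \<nu> where "\<nu> = csqrt (Complex 1 k)"
  have \<nu>_sq: "\<nu>^2 = Complex 1 k"
    unfolding \<nu>_def by simp
  have \<nu>: "0 < Re \<nu>" "0 < Im \<nu>"
    using sqrt_in_first_quadrant[OF \<nu>_sq] Re_csqrt assms(1) unfolding \<nu>_def by simp_all
  then have "\<nu> \<noteq> 0"
    by auto
  define r where "r = \<epsilon> / (2 * cmod \<nu>)"
  have r: "0 < r"
    unfolding r_def using assms(2) \<open>\<nu> \<noteq> 0\<close> by simp
  have \<mu>a: "cnj \<nu> * (r * \<nu>) = of_real (r * (cmod \<nu>)^2)"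
    unfolding of_real_mult complex_norm_square by (simp add: ac_simps)
  have a_sq: "(r * \<nu>)^2 = of_real (r^2) * Complex 1 k"
    by (simp add: power_mult_distrib \<nu>_sq)
  show ?thesis
  proof (rule that)
    show "(cnj \<nu>)^2 = Complex 1 (-k)"
      by (simp flip: complex_cnj_power add: \<nu>_sq complex_eq_iff)
    show "0 < Re (cnj \<nu>)" "Im (cnj \<nu>) < 0"
      using \<nu> by simp_all
    show "0 < Re (cnj \<nu> * (r * \<nu>))" "Im (cnj \<nu> * (r * \<nu>)) = 0"
      unfolding \<mu>a using r \<open>\<nu> \<noteq> 0\<close> by simp_all
    show "0 < nullM k ((r * \<nu>)^2)"
      unfolding a_sq nullM_def using r assms(1) by simp
    show "cmod (r * \<nu>) = \<epsilon> / 2"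
      unfolding norm_mult norm_of_real r_def using assms(2) \<open>\<nu> \<noteq> 0\<close> by simp
  qed
qed

theorem lemma2:
  fixes \<epsilon> \<zeta> :: real
  assumes "\<epsilon> > 0" and "\<zeta> > 1"
  shows "\<not> causally_continuous \<epsilon> \<zeta>"
proof -
  define k where "k = sqrt (\<zeta> - 1)"
  have k: "0 < k" "k^2 = \<zeta> - 1"
    using assms(2) unfolding k_def by simp_all
  obtain \<mu> a where \<mu>: "\<mu>^2 = Complex 1 (-k)" "0 < Re \<mu>" "Im \<mu> < 0"
    and a: "0 < Re (\<mu> * a)" "Im (\<mu> * a) = 0" "0 < nullM k (a^2)" "cmod a = \<epsilon> / 2"
    using null_ray_point_exists[OF k(1) assms(1)] by blast
  define c where "c = Complex 0 (- \<epsilon> / 2)"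
  have c: "0 < nullN k (c^2)" "nullM k (c^2) < 0" "Im (\<mu> * c) < 0" "(cmod c)^2 < \<epsilon>^2"
    "Re (\<mu> * c) < 0"
    unfolding c_def using assms(1) k(1) \<mu>(2,3)
    by (simp_all add: nullN_def nullM_def power2_eq_square cmod_def mult_neg_pos)
  have "(Re c, Im c) \<notin> Ifut \<epsilon> \<zeta> (Re a, Im a)"
    using not_chron_across_null_line[OF k \<mu>(1), of "(Re a, Im a)" "(Re c, Im c)"] a c
    unfolding Ifut_def by simp
  moreover have "(Re c, Im c) \<in> up \<epsilon> \<zeta> (Ipast \<epsilon> \<zeta> (Re a, Im a))"
    using future_quadrant_in_up_past[OF k \<mu>(1), of "(Re a, Im a)" "(Re c, Im c)"] a c by simp
  moreover have "(Re a, Im a) \<in> N_eps \<epsilon>"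
    unfolding mem_N_eps_iff using a(4) assms(1) by (auto simp: power_divide)
  ultimately show ?thesis
    unfolding causally_continuous_def by blast
qed

end
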